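(* Let $E,F$ be Banach spaces and $1\le p<\infty$. Then $|\!|\!|\cdot|\!|\!|_{p,\mathbb{P}}$ is a norm on $\Lambda_p^{\mathbb{P}}(E,F)$, and $(\Lambda_p^{\mathbb{P}}(E,F),|\!|\!|\cdot|\!|\!|_{p,\mathbb{P}})$ is a Banach space.
   Context: $(\Omega,\mathcal{F},\mathbb{P})$ is a probability space, $L^p(\Omega,E,\mathbb{P})$ the Bochner space. For a bounded linear $L:L^p(\Omega,E,\mathbb{P})\to F$, $|\!|\!|L|\!|\!|_{p,\mathbb{P}}:=\sup\{\sum_{i=1}^n\|L(\mathbf{1}_{A_i}x_i)\|_F:\ Y=\sum_{i=1}^n\mathbf{1}_{A_i}x_i,\ A_i\in\mathcal{F}\text{ pairwise disjoint},\ x_i\in E,\ \mathbb{E}\|Y\|_E^p\le1\}$, and $\Lambda_p^{\mathbb{P}}(E,F):=\{L\in L(L^p(\Omega,E,\mathbb{P}),F):|\!|\!|L|\!|\!|_{p,\mathbb{P}}<\infty\}$. *)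

theory Defs
  imports "HOL-Probability.Probability"
begin

type_synonym ('w,'e,'f) lp_op = "('w \<Rightarrow> 'e) \<Rightarrow> 'f"

definition strongly_measurable :: "'w measure \<Rightarrow> ('w \<Rightarrow> 'e::real_normed_vector) \<Rightarrow> bool" where
  "strongly_measurable M f \<longleftrightarrow> f \<in> borel_measurable M \<and>
     (\<exists>s. (\<forall>i. simple_function M (s i)) \<and> (\<forall>x\<in>space M. (\<lambda>i. s i x) \<longlonglongrightarrow> f x))"

text \<open>Representatives of elements of the Bochner space L^p(Omega, E, P).\<close>
definition Lp_space :: "real \<Rightarrow> 'w measure \<Rightarrow> ('w \<Rightarrow> 'e::real_normed_vector) set" where
  "Lp_space p M = {f. strongly_measurable M f \<and> integrable M (\<lambda>x. norm (f x) powr p)}"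

definition Lp_norm :: "real \<Rightarrow> 'w measure \<Rightarrow> ('w \<Rightarrow> 'e::real_normed_vector) \<Rightarrow> real" where
  "Lp_norm p M f = (\<integral>x. norm (f x) powr p \<partial>M) powr (1 / p)"

text \<open>Bounded linear operators L^p(Omega,E,P) -> F, represented as maps on representatives
  that are linear, respect a.e. equality, are bounded, and vanish off L^p (a normalisation
  making the representation of each operator unique).\<close>
definition bounded_linear_Lp ::
  "real \<Rightarrow> 'w measure \<Rightarrow> (('w \<Rightarrow> 'e::real_normed_vector) \<Rightarrow> 'f::real_normed_vector) \<Rightarrow> bool" where
  "bounded_linear_Lp p M L \<longleftrightarrow>
     (\<forall>f\<in>Lp_space p M. \<forall>g\<in>Lp_space p M. L (\<lambda>x. f x + g x) = L f + L g) \<and>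
     (\<forall>f\<in>Lp_space p M. \<forall>c. L (\<lambda>x. c *\<^sub>R f x) = c *\<^sub>R L f) \<and>
     (\<forall>f\<in>Lp_space p M. \<forall>g\<in>Lp_space p M. (AE x in M. f x = g x) \<longrightarrow> L f = L g) \<and>
     (\<exists>C. \<forall>f\<in>Lp_space p M. norm (L f) \<le> C * Lp_norm p M f) \<and>
     (\<forall>f. f \<notin> Lp_space p M \<longrightarrow> L f = 0)"

definition tnorm_set ::
  "real \<Rightarrow> 'w measure \<Rightarrow> (('w \<Rightarrow> 'e::real_normed_vector) \<Rightarrow> 'f::real_normed_vector) \<Rightarrow> real set" where
  "tnorm_set p M L =
     {(\<Sum>i<n. norm (L (\<lambda>\<omega>. indicator (A i) \<omega> *\<^sub>R x i))) | n A (x :: nat \<Rightarrow> 'e).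
        (\<forall>i<n. A i \<in> sets M) \<and> disjoint_family_on A {..<n} \<and>
        (\<integral>\<^sup>+\<omega>. ennreal (norm (\<Sum>i<n. indicator (A i) \<omega> *\<^sub>R x i) powr p) \<partial>M) \<le> 1}"

definition tnorm ::
  "real \<Rightarrow> 'w measure \<Rightarrow> (('w \<Rightarrow> 'e::real_normed_vector) \<Rightarrow> 'f::real_normed_vector) \<Rightarrow> real" where
  "tnorm p M L = Sup (tnorm_set p M L)"

definition Lambda_p ::
  "real \<Rightarrow> 'w measure \<Rightarrow> ((('w \<Rightarrow> 'e::real_normed_vector) \<Rightarrow> 'f::real_normed_vector)) set" where
  "Lambda_p p M = {L. bounded_linear_Lp p M L \<and> bdd_above (tnorm_set p M L)}"

end

theory Submission
  imports Defs
begin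

text \<open>
  The heart of the matter is the inequality norm (L f) <= |||L||| * ||f||_p for every L in
  Lambda_p. For a step function s = sum_i 1_(A_i) x_i with disjoint A_i, the rescaled family
  x_i / t is admissible in the supremum defining |||L||| as soon as t > ||s||_p, and linearity
  of L pulls the factor 1/t out of every term; letting t decrease to ||s||_p gives the bound.
  A general f in L^p is approximated in L^p by simple functions (truncations dominated by
  2 |f|, so dominated convergence applies), and the a priori boundedness of L controls the error.

  Consequently |||L||| = 0 forces L = 0, and a |||.|||-Cauchy sequence (S n) is Cauchy in F at
  every f, hence converges pointwise to some L. Each admissible sum is a finite sum of norms
  of values of the operator, so it passes to pointwise limits: this lower semicontinuity shows
  both that L lies in Lambda_p and that |||S n - L||| tends to 0.
\<close>

definition step_fun :: "nat \<Rightarrow> (nat \<Rightarrow> 'w set) \<Rightarrow> (nat \<Rightarrow> 'e::real_normed_vector) \<Rightarrow> 'w \<Rightarrow> 'e" where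
  "step_fun n A x = (\<lambda>\<omega>. \<Sum>i<n. indicator (A i) \<omega> *\<^sub>R x i)"

definition tnorm_admissible ::
  "real \<Rightarrow> 'w measure \<Rightarrow> nat \<Rightarrow> (nat \<Rightarrow> 'w set) \<Rightarrow> (nat \<Rightarrow> 'e::real_normed_vector) \<Rightarrow> bool" where
  "tnorm_admissible p M n A x \<longleftrightarrow> (\<forall>i<n. A i \<in> sets M) \<and> disjoint_family_on A {..<n} \<and>
     (\<integral>\<^sup>+\<omega>. ennreal (norm (step_fun n A x \<omega>) powr p) \<partial>M) \<le> 1"

definition variation_sum ::
  "(('w \<Rightarrow> 'e::real_normed_vector) \<Rightarrow> 'f::real_normed_vector) \<Rightarrow> nat \<Rightarrow> (nat \<Rightarrow> 'w set) \<Rightarrow> (nat \<Rightarrow> 'e) \<Rightarrow> real"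
  where "variation_sum L n A x = (\<Sum>i<n. norm (L (\<lambda>\<omega>. indicator (A i) \<omega> *\<^sub>R x i)))"

lemma tnorm_set_eq:
  "tnorm_set p M L = {variation_sum L n A x | n A x. tnorm_admissible p M n A x}"
  unfolding tnorm_set_def tnorm_admissible_def variation_sum_def step_fun_def ..

lemma simple_function_step_fun:
  "\<forall>i<n. A i \<in> sets M \<Longrightarrow> simple_function M (step_fun n A x)"
  unfolding step_fun_def
  by (intro simple_function_sum simple_function_compose1[OF simple_function_indicator]) auto

lemma simple_function_eq_step_fun:
  fixes g :: "'w \<Rightarrow> 'e::real_normed_vector"
  assumes g: "simple_function M g"
  obtains n A x where "\<forall>i<n. A i \<in> sets M" "disjoint_family_on A {..<n}"
    "\<forall>\<omega>\<in>space M. g \<omega> = step_fun n A x \<omega>"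
proof -
  let ?R = "g ` space M"
  have fin: "finite ?R" using g by (simp add: simple_function_def)
  obtain e where e: "bij_betw e {..<card ?R} ?R"
    using ex_bij_betw_nat_finite[OF fin] by (auto simp: atLeast0LessThan)
  define A where "A i = g -` {e i} \<inter> space M" for i
  have "\<forall>i<card ?R. A i \<in> sets M"
    unfolding A_def using g by (auto intro: simple_functionD(2))
  moreover have "disjoint_family_on A {..<card ?R}"
    unfolding disjoint_family_on_def A_def using e by (auto simp: bij_betw_def inj_on_def)
  moreover have "g \<omega> = step_fun (card ?R) A e \<omega>" if \<omega>: "\<omega> \<in> space M" for \<omega>
  proof -
    have "step_fun (card ?R) A e \<omega> = (\<Sum>i<card ?R. (\<lambda>v. indicator (g -` {v} \<inter> space M) \<omega> *\<^sub>R v) (e i))"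
      by (simp add: step_fun_def A_def)
    also have "\<dots> = (\<Sum>v\<in>?R. indicator (g -` {v} \<inter> space M) \<omega> *\<^sub>R v)"
      by (rule sum.reindex_bij_betw[OF e])
    also have "\<dots> = (\<Sum>v\<in>?R. if v = g \<omega> then g \<omega> else 0)"
      by (rule sum.cong) (auto simp: indicator_def \<omega>)
    also have "\<dots> = g \<omega>" using fin \<omega> by (simp add: sum.delta')
    finally show ?thesis by simp
  qed
  ultimately show ?thesis using that by blast
qed

lemma simple_function_in_Lp_space:
  fixes f :: "'w \<Rightarrow> 'e::real_normed_vector"
  assumes M: "finite_measure M" and f: "simple_function M f"
  shows "f \<in> Lp_space p M"
proof -
  have "simple_function M (\<lambda>x. norm (f x) powr p)"
    using f by (rule simple_function_compose1)
  then have "Bochner_Integration.simple_bochner_integrable M (\<lambda>x. norm (f x) powr p)"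
    by (rule simple_bochner_integrable.intros) (simp add: finite_measure.emeasure_finite[OF M])
  then have "integrable M (\<lambda>x. norm (f x) powr p)"
    by (rule integrableI_simple_bochner_integrable)
  then show ?thesis
    using f borel_measurable_simple_function[OF f]
    unfolding Lp_space_def strongly_measurable_def by auto
qed

lemma step_fun_in_Lp_space:
  "finite_measure M \<Longrightarrow> \<forall>i<n. A i \<in> sets M \<Longrightarrow> step_fun n A x \<in> Lp_space p M"
  by (intro simple_function_in_Lp_space simple_function_step_fun)

lemma indicator_scaleR_in_Lp_space:
  "finite_measure M \<Longrightarrow> B \<in> sets M \<Longrightarrow> (\<lambda>\<omega>. indicator B \<omega> *\<^sub>R y) \<in> Lp_space p M"
  by (intro simple_function_in_Lp_space simple_function_compose1[OF simple_function_indicator])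

section \<open>Approximation by simple functions in L^p\<close>

lemma strongly_measurable_dominated_simple_approx:
  fixes f :: "'w \<Rightarrow> 'e::real_normed_vector"
  assumes "strongly_measurable M f"
  obtains s where "\<And>i. simple_function M (s i)" "\<And>x. x \<in> space M \<Longrightarrow> (\<lambda>i. s i x) \<longlonglongrightarrow> f x"
    "\<And>i x. norm (s i x) \<le> 2 * norm (f x)"
proof -
  from assms obtain t where [measurable]: "f \<in> borel_measurable M"
    and t: "\<And>i. simple_function M (t i)" and lim: "\<And>x. x \<in> space M \<Longrightarrow> (\<lambda>i. t i x) \<longlonglongrightarrow> f x"
    unfolding strongly_measurable_def by blast
  have [measurable]: "t i \<in> borel_measurable M" for i
    using borel_measurable_simple_function[OF t] .
  define s where "s i x = (if norm (t i x) \<le> 2 * norm (f x) then t i x else 0)" for i x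
  have "simple_function M (s i)" for i
    unfolding s_def by (intro simple_function_If t simple_function_const) measurable
  moreover have bound: "norm (s i x) \<le> 2 * norm (f x)" for i x
    by (simp add: s_def)
  moreover have "(\<lambda>i. s i x) \<longlonglongrightarrow> f x" if x: "x \<in> space M" for x
  proof (cases "f x = 0")
    case True
    then show ?thesis using bound[of _ x] by simp
  next
    case False
    have "(\<lambda>i. norm (t i x)) \<longlonglongrightarrow> norm (f x)" using lim[OF x] by (rule tendsto_norm)
    moreover have "norm (f x) < 2 * norm (f x)" using False by simp
    ultimately have "eventually (\<lambda>i. norm (t i x) < 2 * norm (f x)) sequentially"
      by (rule order_tendstoD(2))
    then have "eventually (\<lambda>i. t i x = s i x) sequentially"
      by eventually_elim (simp add: s_def)
    with lim[OF x] show ?thesis by (rule Lim_transform_eventually)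
  qed
  ultimately show ?thesis using that by blast
qed

lemma Lp_norm_nonneg: "0 \<le> Lp_norm p M f"
  by (simp add: Lp_norm_def)

lemma tendsto_Lp_norm:
  assumes "0 < p" and "(\<lambda>k. \<integral>x. norm (f k x) powr p \<partial>M) \<longlonglongrightarrow> (\<integral>x. norm (g x) powr p \<partial>M)"
  shows "(\<lambda>k. Lp_norm p M (f k)) \<longlonglongrightarrow> Lp_norm p M g"
  unfolding Lp_norm_def using assms by (intro tendsto_powr') auto

lemma tendsto_integral_norm_powr_dominated:
  fixes g :: "nat \<Rightarrow> 'w \<Rightarrow> 'e::real_normed_vector"
  assumes p: "0 < p" and meas: "\<And>k. (\<lambda>x. norm (g k x) powr p) \<in> borel_measurable M"
    and lim: "\<And>x. x \<in> space M \<Longrightarrow> (\<lambda>k. g k x) \<longlonglongrightarrow> h x"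
    and dom: "\<And>k x. norm (g k x) \<le> c * norm (f x)" and c: "0 \<le> c"
    and int: "integrable M (\<lambda>x. norm (f x) powr p)"
  shows "(\<lambda>k. \<integral>x. norm (g k x) powr p \<partial>M) \<longlonglongrightarrow> (\<integral>x. norm (h x) powr p \<partial>M)"
proof (rule integral_dominated_convergence[where w="\<lambda>x. c powr p * norm (f x) powr p"])
  have pointwise: "(\<lambda>k. norm (g k x) powr p) \<longlonglongrightarrow> norm (h x) powr p" if "x \<in> space M" for x
    using lim[OF that] p by (intro tendsto_powr' tendsto_norm) auto
  then show "(\<lambda>x. norm (h x) powr p) \<in> borel_measurable M"
    by (rule borel_measurable_LIMSEQ_metric[OF meas])
  show "AE x in M. (\<lambda>k. norm (g k x) powr p) \<longlonglongrightarrow> norm (h x) powr p"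
    using pointwise by (rule AE_I2)
  have "norm (g k x) powr p \<le> c powr p * norm (f x) powr p" for k x
    using dom[of k x] c p by (simp add: powr_mono2 flip: powr_mult)
  then show "AE x in M. norm (norm (g k x) powr p) \<le> c powr p * norm (f x) powr p" for k
    by simp
qed (use int meas in auto)

lemma Lp_space_simple_approx:
  fixes f :: "'w \<Rightarrow> 'e::real_normed_vector"
  assumes p: "0 < p" and f: "f \<in> Lp_space p M"
  obtains s where "\<And>k. simple_function M (s k)"
    "(\<lambda>k. Lp_norm p M (\<lambda>x. f x - s k x)) \<longlonglongrightarrow> 0"
    "(\<lambda>k. Lp_norm p M (s k)) \<longlonglongrightarrow> Lp_norm p M f"
proof -
  have int: "integrable M (\<lambda>x. norm (f x) powr p)"
    using f unfolding Lp_space_def by blast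
  obtain s where s: "\<And>k. simple_function M (s k)" and lim: "\<And>x. x \<in> space M \<Longrightarrow> (\<lambda>k. s k x) \<longlonglongrightarrow> f x"
    and bound: "\<And>k x. norm (s k x) \<le> 2 * norm (f x)"
    using strongly_measurable_dominated_simple_approx f unfolding Lp_space_def by blast
  have "(\<lambda>k. \<integral>x. norm (s k x) powr p \<partial>M) \<longlonglongrightarrow> (\<integral>x. norm (f x) powr p \<partial>M)"
    using s by (intro tendsto_integral_norm_powr_dominated[OF p _ lim bound _ int]
        borel_measurable_simple_function simple_function_compose1[where g="\<lambda>y. norm y powr p"]) auto
  then have norms: "(\<lambda>k. Lp_norm p M (s k)) \<longlonglongrightarrow> Lp_norm p M f"
    by (rule tendsto_Lp_norm[OF p])
  \<comment> \<open>E need not be separable, so f - s k is measurable only as a pointwise limit.\<close>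
  have "(\<lambda>x. norm (f x - s k x) powr p) \<in> borel_measurable M" for k
  proof (rule borel_measurable_LIMSEQ_metric)
    show "(\<lambda>x. norm (s j x - s k x) powr p) \<in> borel_measurable M" for j
      by (intro borel_measurable_simple_function simple_function_compose2[OF s s])
    show "(\<lambda>j. norm (s j x - s k x) powr p) \<longlonglongrightarrow> norm (f x - s k x) powr p" if "x \<in> space M" for x
      using lim[OF that] p by (intro tendsto_powr' tendsto_norm tendsto_diff tendsto_const) auto
  qed
  moreover have "(\<lambda>k. f x - s k x) \<longlonglongrightarrow> 0" if "x \<in> space M" for x
    using tendsto_diff[OF tendsto_const[of "f x"] lim[OF that]] by simp
  moreover have "norm (f x - s k x) \<le> 3 * norm (f x)" for k x
    using norm_triangle_ineq4[of "f x" "s k x"] bound[of k x] by linarith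
  ultimately have "(\<lambda>k. \<integral>x. norm (f x - s k x) powr p \<partial>M) \<longlonglongrightarrow> (\<integral>x. norm (0::'e) powr p \<partial>M)"
    by (intro tendsto_integral_norm_powr_dominated[OF p _ _ _ _ int, where c=3]) auto
  then have "(\<lambda>k. Lp_norm p M (\<lambda>x. f x - s k x)) \<longlonglongrightarrow> Lp_norm p M (\<lambda>_. 0::'e)"
    by (rule tendsto_Lp_norm[OF p])
  moreover have "Lp_norm p M (\<lambda>_. 0::'e) = 0"
    using p by (simp add: Lp_norm_def)
  ultimately show ?thesis
    using that[OF s _ norms] by simp
qed

lemma bounded_linear_LpD_add:
  "bounded_linear_Lp p M L \<Longrightarrow> f \<in> Lp_space p M \<Longrightarrow> g \<in> Lp_space p M \<Longrightarrow>
    L (\<lambda>x. f x + g x) = L f + L g"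
  unfolding bounded_linear_Lp_def by blast

lemma bounded_linear_LpD_scaleR:
  "bounded_linear_Lp p M L \<Longrightarrow> f \<in> Lp_space p M \<Longrightarrow> L (\<lambda>x. c *\<^sub>R f x) = c *\<^sub>R L f"
  unfolding bounded_linear_Lp_def by blast

lemma bounded_linear_LpD_AE_cong:
  "bounded_linear_Lp p M L \<Longrightarrow> f \<in> Lp_space p M \<Longrightarrow> g \<in> Lp_space p M \<Longrightarrow>
    (AE x in M. f x = g x) \<Longrightarrow> L f = L g"
  unfolding bounded_linear_Lp_def by blast

lemma bounded_linear_LpD_outside:
  "bounded_linear_Lp p M L \<Longrightarrow> f \<notin> Lp_space p M \<Longrightarrow> L f = 0"
  unfolding bounded_linear_Lp_def by blast

lemma bounded_linear_LpD_bound: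
  assumes L: "bounded_linear_Lp p M L"
  shows "\<exists>C. \<forall>f. norm (L f) \<le> C * Lp_norm p M f"
proof -
  obtain C where C: "\<forall>f\<in>Lp_space p M. norm (L f) \<le> C * Lp_norm p M f"
    using L unfolding bounded_linear_Lp_def by blast
  have "norm (L f) \<le> max C 0 * Lp_norm p M f" for f
  proof (cases "f \<in> Lp_space p M")
    case True
    then have "norm (L f) \<le> C * Lp_norm p M f" using C by blast
    also have "\<dots> \<le> max C 0 * Lp_norm p M f"
      by (intro mult_right_mono Lp_norm_nonneg) simp
    finally show ?thesis .
  qed (simp add: bounded_linear_LpD_outside[OF L] Lp_norm_def)
  then show ?thesis by blast
qed

lemma bounded_linear_LpD_diff:
  assumes L: "bounded_linear_Lp p M L" and "f \<in> Lp_space p M" "g \<in> Lp_space p M"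
    and "(\<lambda>x. - g x) \<in> Lp_space p M"
  shows "L (\<lambda>x. f x - g x) = L f - L g"
  using bounded_linear_LpD_add[OF L assms(2,4)] bounded_linear_LpD_scaleR[OF L assms(3), of "-1"]
  by simp

lemma bounded_linear_LpD_step_fun:
  assumes M: "finite_measure M" and L: "bounded_linear_Lp p M L" and A: "\<forall>i<n. A i \<in> sets M"
  shows "L (step_fun n A x) = (\<Sum>i<n. L (\<lambda>\<omega>. indicator (A i) \<omega> *\<^sub>R x i))"
  using A
proof (induction n)
  case 0
  have "L (\<lambda>\<omega>. 0 *\<^sub>R step_fun 0 A x \<omega>) = 0 *\<^sub>R L (step_fun 0 A x)"
    using step_fun_in_Lp_space[OF M] by (intro bounded_linear_LpD_scaleR[OF L]) auto
  then show ?case by (simp add: step_fun_def)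
next
  case (Suc n)
  have "step_fun (Suc n) A x = (\<lambda>\<omega>. step_fun n A x \<omega> + indicator (A n) \<omega> *\<^sub>R x n)"
    by (simp add: step_fun_def)
  then have "L (step_fun (Suc n) A x) = L (step_fun n A x) + L (\<lambda>\<omega>. indicator (A n) \<omega> *\<^sub>R x n)"
    using Suc.prems
    by (simp add: bounded_linear_LpD_add[OF L] step_fun_in_Lp_space[OF M] indicator_scaleR_in_Lp_space[OF M])
  then show ?case using Suc by simp
qed

lemma bounded_linear_Lp_zero: "bounded_linear_Lp p M (\<lambda>_. 0)"
  unfolding bounded_linear_Lp_def by (auto intro!: exI[of _ 0])

lemma bounded_linear_Lp_add:
  fixes L K :: "('w \<Rightarrow> 'e::real_normed_vector) \<Rightarrow> 'f::real_normed_vector"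
  assumes L: "bounded_linear_Lp p M L" and K: "bounded_linear_Lp p M K"
  shows "bounded_linear_Lp p M (\<lambda>Y. L Y + K Y)"
  unfolding bounded_linear_Lp_def
proof (intro conjI ballI allI impI)
  fix f g :: "'w \<Rightarrow> 'e" assume f: "f \<in> Lp_space p M" and g: "g \<in> Lp_space p M"
  show "L (\<lambda>x. f x + g x) + K (\<lambda>x. f x + g x) = L f + K f + (L g + K g)"
    using bounded_linear_LpD_add[OF L f g] bounded_linear_LpD_add[OF K f g] by simp
  assume "AE x in M. f x = g x"
  then show "L f + K f = L g + K g"
    using bounded_linear_LpD_AE_cong[OF L f g] bounded_linear_LpD_AE_cong[OF K f g] by simp
next
  fix f :: "'w \<Rightarrow> 'e" and c assume "f \<in> Lp_space p M"
  then show "L (\<lambda>x. c *\<^sub>R f x) + K (\<lambda>x. c *\<^sub>R f x) = c *\<^sub>R (L f + K f)"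
    using bounded_linear_LpD_scaleR[OF L] bounded_linear_LpD_scaleR[OF K] by (simp add: scaleR_add_right)
next
  fix f :: "'w \<Rightarrow> 'e" assume "f \<notin> Lp_space p M"
  then show "L f + K f = 0"
    using bounded_linear_LpD_outside[OF L] bounded_linear_LpD_outside[OF K] by simp
next
  obtain C1 where C1: "\<And>f. norm (L f) \<le> C1 * Lp_norm p M f"
    using bounded_linear_LpD_bound[OF L] by blast
  obtain C2 where C2: "\<And>f. norm (K f) \<le> C2 * Lp_norm p M f"
    using bounded_linear_LpD_bound[OF K] by blast
  have "norm (L f + K f) \<le> (C1 + C2) * Lp_norm p M f" for f
    using norm_triangle_ineq[of "L f" "K f"] C1[of f] C2[of f] by (simp add: distrib_right)
  then show "\<exists>C. \<forall>f\<in>Lp_space p M. norm (L f + K f) \<le> C * Lp_norm p M f"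
    by blast
qed

lemma bounded_linear_Lp_scaleR:
  fixes L :: "('w \<Rightarrow> 'e::real_normed_vector) \<Rightarrow> 'f::real_normed_vector"
  assumes L: "bounded_linear_Lp p M L"
  shows "bounded_linear_Lp p M (\<lambda>Y. c *\<^sub>R L Y)"
  unfolding bounded_linear_Lp_def
proof (intro conjI ballI allI impI)
  fix f g :: "'w \<Rightarrow> 'e" assume f: "f \<in> Lp_space p M" and g: "g \<in> Lp_space p M"
  show "c *\<^sub>R L (\<lambda>x. f x + g x) = c *\<^sub>R L f + c *\<^sub>R L g"
    using bounded_linear_LpD_add[OF L f g] by (simp add: scaleR_add_right)
  assume "AE x in M. f x = g x"
  then show "c *\<^sub>R L f = c *\<^sub>R L g"
    using bounded_linear_LpD_AE_cong[OF L f g] by simp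
next
  fix f :: "'w \<Rightarrow> 'e" and d assume "f \<in> Lp_space p M"
  then show "c *\<^sub>R L (\<lambda>x. d *\<^sub>R f x) = d *\<^sub>R c *\<^sub>R L f"
    using bounded_linear_LpD_scaleR[OF L] by (simp add: mult.commute)
next
  fix f :: "'w \<Rightarrow> 'e" assume "f \<notin> Lp_space p M"
  then show "c *\<^sub>R L f = 0"
    using bounded_linear_LpD_outside[OF L] by simp
next
  obtain C where C: "\<And>f. norm (L f) \<le> C * Lp_norm p M f"
    using bounded_linear_LpD_bound[OF L] by blast
  have "norm (c *\<^sub>R L f) \<le> (\<bar>c\<bar> * C) * Lp_norm p M f" for f
    using mult_left_mono[OF C[of f] abs_ge_zero[of c]] by (simp add: mult.assoc)
  then show "\<exists>C. \<forall>f\<in>Lp_space p M. norm (c *\<^sub>R L f) \<le> C * Lp_norm p M f"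
    by blast
qed

section \<open>The triple norm on Lambda_p\<close>

lemma variation_sum_le_tnorm:
  "L \<in> Lambda_p p M \<Longrightarrow> tnorm_admissible p M n A x \<Longrightarrow> variation_sum L n A x \<le> tnorm p M L"
  unfolding tnorm_def Lambda_p_def tnorm_set_eq by (auto intro: cSup_upper)

lemma zero_in_tnorm_set: "0 \<in> tnorm_set p M L"
proof -
  have "tnorm_admissible p M 0 (\<lambda>_. {}) (\<lambda>_. 0)"
    by (simp add: tnorm_admissible_def step_fun_def disjoint_family_on_def)
  then show ?thesis unfolding tnorm_set_eq variation_sum_def by force
qed

lemma tnorm_nonneg: "L \<in> Lambda_p p M \<Longrightarrow> 0 \<le> tnorm p M L"
  unfolding tnorm_def Lambda_p_def by (auto intro: cSup_upper2[OF zero_in_tnorm_set])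

lemma
  fixes L :: "('w \<Rightarrow> 'e::real_normed_vector) \<Rightarrow> 'f::real_normed_vector"
  assumes "\<And>n A (x :: nat \<Rightarrow> 'e). tnorm_admissible p M n A x \<Longrightarrow> variation_sum L n A x \<le> B"
  shows bdd_above_tnorm_setI: "bdd_above (tnorm_set p M L)"
    and tnorm_least: "tnorm p M L \<le> B"
proof -
  have le: "y \<le> B" if "y \<in> tnorm_set p M L" for y
    using that assms unfolding tnorm_set_eq by blast
  then show "bdd_above (tnorm_set p M L)"
    by (rule bdd_aboveI)
  show "tnorm p M L \<le> B"
    unfolding tnorm_def using zero_in_tnorm_set by (blast intro: cSup_least le)
qed

lemma Lambda_pI:
  fixes L :: "('w \<Rightarrow> 'e::real_normed_vector) \<Rightarrow> 'f::real_normed_vector"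
  assumes "bounded_linear_Lp p M L"
    and "\<And>n A (x :: nat \<Rightarrow> 'e). tnorm_admissible p M n A x \<Longrightarrow> variation_sum L n A x \<le> B"
  shows "L \<in> Lambda_p p M"
proof -
  have "bdd_above (tnorm_set p M L)"
    by (rule bdd_above_tnorm_setI) (rule assms(2))
  then show ?thesis using assms(1) unfolding Lambda_p_def by blast
qed

lemma zero_in_Lambda_p: "(\<lambda>_. 0) \<in> Lambda_p p M"
  by (rule Lambda_pI[OF bounded_linear_Lp_zero, where B=0]) (simp add: variation_sum_def)

lemma tnorm_zero: "tnorm p M (\<lambda>_::'w \<Rightarrow> 'e::real_normed_vector. 0::'f::real_normed_vector) = 0"
  by (rule antisym[OF tnorm_least tnorm_nonneg[OF zero_in_Lambda_p]]) (simp add: variation_sum_def)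

lemma
  fixes L K :: "('w \<Rightarrow> 'e::real_normed_vector) \<Rightarrow> 'f::real_normed_vector"
  assumes L: "L \<in> Lambda_p p M" and K: "K \<in> Lambda_p p M"
  shows add_in_Lambda_p: "(\<lambda>Y. L Y + K Y) \<in> Lambda_p p M"
    and tnorm_triangle: "tnorm p M (\<lambda>Y. L Y + K Y) \<le> tnorm p M L + tnorm p M K"
proof -
  have "variation_sum (\<lambda>Y. L Y + K Y) n A x \<le> tnorm p M L + tnorm p M K"
    if "tnorm_admissible p M n A x" for n A and x :: "nat \<Rightarrow> 'e"
  proof -
    have "variation_sum (\<lambda>Y. L Y + K Y) n A x \<le> variation_sum L n A x + variation_sum K n A x"
      unfolding variation_sum_def sum.distrib[symmetric] by (intro sum_mono norm_triangle_ineq)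
    also have "\<dots> \<le> tnorm p M L + tnorm p M K"
      using L K that by (intro add_mono variation_sum_le_tnorm)
    finally show ?thesis .
  qed
  moreover have "bounded_linear_Lp p M (\<lambda>Y. L Y + K Y)"
    using L K unfolding Lambda_p_def by (auto intro: bounded_linear_Lp_add)
  ultimately show "(\<lambda>Y. L Y + K Y) \<in> Lambda_p p M"
    and "tnorm p M (\<lambda>Y. L Y + K Y) \<le> tnorm p M L + tnorm p M K"
    by (auto intro: Lambda_pI tnorm_least)
qed

lemma
  fixes L :: "('w \<Rightarrow> 'e::real_normed_vector) \<Rightarrow> 'f::real_normed_vector"
  assumes L: "L \<in> Lambda_p p M"
  shows scaleR_in_Lambda_p: "(\<lambda>Y. c *\<^sub>R L Y) \<in> Lambda_p p M"
    and tnorm_scaleR_le: "tnorm p M (\<lambda>Y. c *\<^sub>R L Y) \<le> \<bar>c\<bar> * tnorm p M L"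
proof -
  have "variation_sum (\<lambda>Y. c *\<^sub>R L Y) n A x \<le> \<bar>c\<bar> * tnorm p M L"
    if "tnorm_admissible p M n A x" for n A and x :: "nat \<Rightarrow> 'e"
    using mult_left_mono[OF variation_sum_le_tnorm[OF L that] abs_ge_zero[of c]]
    by (simp add: variation_sum_def sum_distrib_left)
  moreover have "bounded_linear_Lp p M (\<lambda>Y. c *\<^sub>R L Y)"
    using L unfolding Lambda_p_def by (auto intro: bounded_linear_Lp_scaleR)
  ultimately show "(\<lambda>Y. c *\<^sub>R L Y) \<in> Lambda_p p M"
    and "tnorm p M (\<lambda>Y. c *\<^sub>R L Y) \<le> \<bar>c\<bar> * tnorm p M L"
    by (auto intro: Lambda_pI tnorm_least)
qed

lemma tnorm_scaleR:
  fixes L :: "('w \<Rightarrow> 'e::real_normed_vector) \<Rightarrow> 'f::real_normed_vector"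
  assumes L: "L \<in> Lambda_p p M"
  shows "tnorm p M (\<lambda>Y. c *\<^sub>R L Y) = \<bar>c\<bar> * tnorm p M L"
proof (cases "c = 0")
  case True
  then show ?thesis using tnorm_zero by simp
next
  case False
  have "tnorm p M (\<lambda>Y. inverse c *\<^sub>R (c *\<^sub>R L Y)) \<le> \<bar>inverse c\<bar> * tnorm p M (\<lambda>Y. c *\<^sub>R L Y)"
    by (rule tnorm_scaleR_le[OF scaleR_in_Lambda_p[OF L]])
  then have "\<bar>c\<bar> * tnorm p M L \<le> tnorm p M (\<lambda>Y. c *\<^sub>R L Y)"
    using False by (simp add: field_simps)
  then show ?thesis using tnorm_scaleR_le[OF L, of c] by linarith
qed

lemma diff_in_Lambda_p:
  "L \<in> Lambda_p p M \<Longrightarrow> K \<in> Lambda_p p M \<Longrightarrow> (\<lambda>Y. L Y - K Y) \<in> Lambda_p p M"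
  using add_in_Lambda_p[OF _ scaleR_in_Lambda_p, of L p M K "-1"] by simp

section \<open>Domination of the operator norm by the triple norm\<close>

lemma nn_integral_norm_powr_scaled_le_1:
  fixes f :: "'w \<Rightarrow> 'e::real_normed_vector"
  assumes p: "0 < p" and f: "f \<in> Lp_space p M" and t: "Lp_norm p M f \<le> t" "0 < t"
  shows "(\<integral>\<^sup>+\<omega>. ennreal (norm (f \<omega> /\<^sub>R t) powr p) \<partial>M) \<le> 1"
proof -
  define I where "I = (\<integral>\<omega>. norm (f \<omega>) powr p \<partial>M)"
  have int: "integrable M (\<lambda>\<omega>. norm (f \<omega>) powr p)"
    using f unfolding Lp_space_def by blast
  have "0 \<le> I" unfolding I_def by (rule integral_nonneg_AE) auto
  then have "I = Lp_norm p M f powr p"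
    using p unfolding Lp_norm_def I_def[symmetric] by (simp add: powr_powr)
  also have "\<dots> \<le> t powr p"
    using t p by (intro powr_mono2 Lp_norm_nonneg) auto
  finally have "I / t powr p \<le> 1"
    using t by simp
  moreover have "norm (v /\<^sub>R t) powr p = norm v powr p / t powr p" for v :: 'e
  proof -
    have "norm (v /\<^sub>R t) = norm v / t"
      using t by (simp add: divide_inverse_commute)
    then show ?thesis
      using t by (simp add: powr_divide)
  qed
  then have "(\<integral>\<^sup>+\<omega>. ennreal (norm (f \<omega> /\<^sub>R t) powr p) \<partial>M) = ennreal (I / t powr p)"
    using int unfolding I_def by (simp add: nn_integral_eq_integral)
  ultimately show ?thesis
    by (simp add: ennreal_le_1)
qed

lemma step_fun_scaleR: "step_fun n A (\<lambda>i. c *\<^sub>R x i) = (\<lambda>\<omega>. c *\<^sub>R step_fun n A x \<omega>)"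
  unfolding step_fun_def scaleR_sum_right scaleR_scaleR by (simp only: mult.commute)

lemma variation_sum_scaleR:
  assumes M: "finite_measure M" and L: "bounded_linear_Lp p M L" and A: "\<forall>i<n. A i \<in> sets M"
  shows "variation_sum L n A (\<lambda>i. c *\<^sub>R x i) = \<bar>c\<bar> * variation_sum L n A x"
proof -
  have "L (\<lambda>\<omega>. indicator (A i) \<omega> *\<^sub>R (c *\<^sub>R x i)) = c *\<^sub>R L (\<lambda>\<omega>. indicator (A i) \<omega> *\<^sub>R x i)"
    if "i < n" for i
  proof -
    have "L (\<lambda>\<omega>. c *\<^sub>R (indicator (A i) \<omega> *\<^sub>R x i)) = c *\<^sub>R L (\<lambda>\<omega>. indicator (A i) \<omega> *\<^sub>R x i)"
      using A that by (intro bounded_linear_LpD_scaleR[OF L] indicator_scaleR_in_Lp_space[OF M]) auto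
    then show ?thesis by (simp add: mult.commute)
  qed
  then show ?thesis by (simp add: variation_sum_def sum_distrib_left)
qed

lemma norm_step_fun_le_tnorm:
  fixes L :: "('w \<Rightarrow> 'e::real_normed_vector) \<Rightarrow> 'f::real_normed_vector"
  assumes M: "finite_measure M" and p: "0 < p" and L: "L \<in> Lambda_p p M"
    and A: "\<forall>i<n. A i \<in> sets M" and d: "disjoint_family_on A {..<n}"
  shows "norm (L (step_fun n A x)) \<le> tnorm p M L * Lp_norm p M (step_fun n A x)"
proof -
  have bl: "bounded_linear_Lp p M L" using L unfolding Lambda_p_def by blast
  define N where "N = Lp_norm p M (step_fun n A x)"
  have scaled: "variation_sum L n A x \<le> t * tnorm p M L" if t: "N < t" for t
  proof -
    have t0: "0 < t" using t Lp_norm_nonneg[of p M "step_fun n A x"] unfolding N_def by linarith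
    have "(\<integral>\<^sup>+\<omega>. ennreal (norm (step_fun n A x \<omega> /\<^sub>R t) powr p) \<partial>M) \<le> 1"
      using t t0 by (intro nn_integral_norm_powr_scaled_le_1 p step_fun_in_Lp_space[OF M A]) (auto simp: N_def)
    then have "tnorm_admissible p M n A (\<lambda>i. x i /\<^sub>R t)"
      unfolding tnorm_admissible_def step_fun_scaleR using A d by blast
    then have "variation_sum L n A (\<lambda>i. x i /\<^sub>R t) \<le> tnorm p M L"
      by (rule variation_sum_le_tnorm[OF L])
    then show ?thesis
      using t0 by (simp add: variation_sum_scaleR[OF M bl A] field_simps)
  qed
  \<comment> \<open>Taking the limit t -> N instead of t = N also covers the case N = 0.\<close>
  have "variation_sum L n A x \<le> N * tnorm p M L"
  proof (rule tendsto_le[OF trivial_limit_at_right_real])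
    show "((\<lambda>t. t * tnorm p M L) \<longlongrightarrow> N * tnorm p M L) (at_right N)"
      by (intro tendsto_intros)
    show "\<forall>\<^sub>F t in at_right N. variation_sum L n A x \<le> t * tnorm p M L"
      using eventually_at_right_less by (rule eventually_mono) (rule scaled)
  qed simp
  moreover have "norm (L (step_fun n A x)) \<le> variation_sum L n A x"
    unfolding bounded_linear_LpD_step_fun[OF M bl A] variation_sum_def by (rule norm_sum)
  ultimately show ?thesis
    unfolding N_def by (simp add: mult.commute)
qed


lemma norm_simple_function_le_tnorm:
  fixes L :: "('w \<Rightarrow> 'e::real_normed_vector) \<Rightarrow> 'f::real_normed_vector"
  assumes M: "finite_measure M" and p: "0 < p" and L: "L \<in> Lambda_p p M"
    and s: "simple_function M s"
  shows "norm (L s) \<le> tnorm p M L * Lp_norm p M s"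
proof -
  obtain n A x where A: "\<forall>i<n. A i \<in> sets M" and d: "disjoint_family_on A {..<n}"
    and eq: "\<forall>\<omega>\<in>space M. s \<omega> = step_fun n A x \<omega>"
    using simple_function_eq_step_fun[OF s] by blast
  have bl: "bounded_linear_Lp p M L" using L unfolding Lambda_p_def by blast
  have "L s = L (step_fun n A x)"
    using eq by (intro bounded_linear_LpD_AE_cong[OF bl] simple_function_in_Lp_space[OF M s]
        step_fun_in_Lp_space[OF M A] AE_I2) auto
  moreover have "Lp_norm p M s = Lp_norm p M (step_fun n A x)"
    using eq unfolding Lp_norm_def by (simp cong: Bochner_Integration.integral_cong)
  ultimately show ?thesis
    using norm_step_fun_le_tnorm[OF M p L A d] by simp
qed

lemma norm_le_tnorm_mult_Lp_norm:
  fixes L :: "('w \<Rightarrow> 'e::real_normed_vector) \<Rightarrow> 'f::real_normed_vector"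
  assumes M: "finite_measure M" and p: "0 < p" and L: "L \<in> Lambda_p p M" and f: "f \<in> Lp_space p M"
  shows "norm (L f) \<le> tnorm p M L * Lp_norm p M f"
proof -
  have bl: "bounded_linear_Lp p M L" using L unfolding Lambda_p_def by blast
  obtain C where C: "\<And>g. norm (L g) \<le> C * Lp_norm p M g"
    using bounded_linear_LpD_bound[OF bl] by blast
  obtain s where s: "\<And>k. simple_function M (s k)"
    and err: "(\<lambda>k. Lp_norm p M (\<lambda>x. f x - s k x)) \<longlonglongrightarrow> 0"
    and norms: "(\<lambda>k. Lp_norm p M (s k)) \<longlonglongrightarrow> Lp_norm p M f"
    using Lp_space_simple_approx[OF p f] by metis
  have bound: "norm (L f) \<le> C * Lp_norm p M (\<lambda>x. f x - s k x) + tnorm p M L * Lp_norm p M (s k)" for k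
  proof -
    have "(\<lambda>x. - s k x) \<in> Lp_space p M"
      by (rule simple_function_in_Lp_space[OF M simple_function_compose1[OF s]])
    then have "L (\<lambda>x. f x - s k x) = L f - L (s k)"
      by (rule bounded_linear_LpD_diff[OF bl f simple_function_in_Lp_space[OF M s]])
    then have "norm (L f) \<le> norm (L (\<lambda>x. f x - s k x)) + norm (L (s k))"
      using norm_triangle_ineq[of "L f - L (s k)" "L (s k)"] by simp
    then show ?thesis
      using C[of "\<lambda>x. f x - s k x"] norm_simple_function_le_tnorm[OF M p L s, of k] by linarith
  qed
  have "(\<lambda>k. C * Lp_norm p M (\<lambda>x. f x - s k x) + tnorm p M L * Lp_norm p M (s k))
      \<longlonglongrightarrow> C * 0 + tnorm p M L * Lp_norm p M f"
    by (intro tendsto_add tendsto_mult_left err norms)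
  from tendsto_le[OF sequentially_bot this tendsto_const] bound show ?thesis
    by simp
qed

lemma tnorm_eq_0_iff:
  fixes L :: "('w \<Rightarrow> 'e::real_normed_vector) \<Rightarrow> 'f::real_normed_vector"
  assumes M: "finite_measure M" and p: "0 < p" and L: "L \<in> Lambda_p p M"
  shows "tnorm p M L = 0 \<longleftrightarrow> L = (\<lambda>_. 0)"
proof
  assume "tnorm p M L = 0"
  then have "L f = 0" if "f \<in> Lp_space p M" for f
    using norm_le_tnorm_mult_Lp_norm[OF M p L that] by simp
  moreover have "L f = 0" if "f \<notin> Lp_space p M" for f
    using L that unfolding Lambda_p_def by (auto intro: bounded_linear_LpD_outside)
  ultimately show "L = (\<lambda>_. 0)" by (intro ext) (cases, auto)
qed (simp add: tnorm_zero)

section \<open>Completeness\<close>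

lemma bounded_linear_Lp_pointwise_limit:
  fixes S :: "nat \<Rightarrow> ('w \<Rightarrow> 'e::real_normed_vector) \<Rightarrow> 'f::real_normed_vector"
  assumes S: "\<And>n. bounded_linear_Lp p M (S n)" and lim: "\<And>f. (\<lambda>n. S n f) \<longlonglongrightarrow> L f"
    and bound: "\<And>f. f \<in> Lp_space p M \<Longrightarrow> \<forall>\<^sub>F n in sequentially. norm (S n f) \<le> C * Lp_norm p M f"
  shows "bounded_linear_Lp p M L"
  unfolding bounded_linear_Lp_def
proof (intro conjI ballI allI impI)
  fix f g :: "'w \<Rightarrow> 'e" assume f: "f \<in> Lp_space p M" and g: "g \<in> Lp_space p M"
  have "(\<lambda>n. S n (\<lambda>x. f x + g x)) \<longlonglongrightarrow> L f + L g"
    using bounded_linear_LpD_add[OF S f g] by (simp add: tendsto_add lim)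
  then show "L (\<lambda>x. f x + g x) = L f + L g"
    using lim LIMSEQ_unique by blast
  assume "AE x in M. f x = g x"
  then have "(\<lambda>n. S n f) = (\<lambda>n. S n g)"
    using bounded_linear_LpD_AE_cong[OF S f g] by simp
  then show "L f = L g"
    using lim LIMSEQ_unique by metis
next
  fix f :: "'w \<Rightarrow> 'e" and c assume f: "f \<in> Lp_space p M"
  have "(\<lambda>n. S n (\<lambda>x. c *\<^sub>R f x)) \<longlonglongrightarrow> c *\<^sub>R L f"
    using bounded_linear_LpD_scaleR[OF S f] by (simp add: tendsto_scaleR lim)
  then show "L (\<lambda>x. c *\<^sub>R f x) = c *\<^sub>R L f"
    using lim LIMSEQ_unique by blast
next
  fix f :: "'w \<Rightarrow> 'e" assume "f \<notin> Lp_space p M"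
  then have "(\<lambda>n. S n f) \<longlonglongrightarrow> 0"
    using bounded_linear_LpD_outside[OF S] by simp
  then show "L f = 0"
    using lim LIMSEQ_unique by blast
next
  have "norm (L f) \<le> C * Lp_norm p M f" if "f \<in> Lp_space p M" for f
    using tendsto_le[OF sequentially_bot tendsto_const tendsto_norm[OF lim] bound[OF that]] .
  then show "\<exists>C. \<forall>f\<in>Lp_space p M. norm (L f) \<le> C * Lp_norm p M f"
    by blast
qed

lemma variation_sum_pointwise_limit_le:
  fixes S :: "nat \<Rightarrow> ('w \<Rightarrow> 'e::real_normed_vector) \<Rightarrow> 'f::real_normed_vector"
  assumes lim: "\<And>f. (\<lambda>k. S k f) \<longlonglongrightarrow> L f"
    and bound: "\<forall>\<^sub>F k in sequentially. S k \<in> Lambda_p p M \<and> tnorm p M (S k) \<le> B"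
    and adm: "tnorm_admissible p M n A x"
  shows "variation_sum L n A x \<le> B"
proof (rule tendsto_le[OF sequentially_bot tendsto_const])
  show "(\<lambda>k. variation_sum (S k) n A x) \<longlonglongrightarrow> variation_sum L n A x"
    unfolding variation_sum_def by (intro tendsto_sum tendsto_norm lim)
  show "\<forall>\<^sub>F k in sequentially. variation_sum (S k) n A x \<le> B"
    using bound by eventually_elim (use variation_sum_le_tnorm adm in fastforce)
qed

lemma Cauchy_Lambda_p_pointwise:
  fixes S :: "nat \<Rightarrow> ('w \<Rightarrow> 'e::real_normed_vector) \<Rightarrow> 'f::real_normed_vector"
  assumes M: "finite_measure M" and p: "0 < p" and S: "\<And>n. S n \<in> Lambda_p p M"
    and Cauchy: "\<forall>e>0. \<exists>N. \<forall>m\<ge>N. \<forall>n\<ge>N. tnorm p M (\<lambda>Y. S m Y - S n Y) < e"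
  shows "Cauchy (\<lambda>n. S n f)"
proof (cases "f \<in> Lp_space p M")
  case True
  show ?thesis
  proof (rule CauchyI)
    fix e :: real assume e: "0 < e"
    define c where "c = Lp_norm p M f + 1"
    have c: "0 < c" unfolding c_def using Lp_norm_nonneg[of p M f] by linarith
    obtain N where N: "\<forall>m\<ge>N. \<forall>n\<ge>N. tnorm p M (\<lambda>Y. S m Y - S n Y) < e / c"
      using Cauchy e c by (meson divide_pos_pos)
    have "norm (S m f - S n f) < e" if "N \<le> m" "N \<le> n" for m n
    proof -
      have "norm (S m f - S n f) \<le> tnorm p M (\<lambda>Y. S m Y - S n Y) * Lp_norm p M f"
        using norm_le_tnorm_mult_Lp_norm[OF M p diff_in_Lambda_p[OF S S] True] by simp
      also have "\<dots> \<le> e / c * Lp_norm p M f"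
        using N that by (intro mult_right_mono Lp_norm_nonneg) (auto simp: less_imp_le)
      also have "\<dots> < e"
        using e c unfolding c_def by (simp add: field_simps)
      finally show ?thesis .
    qed
    then show "\<exists>N. \<forall>m\<ge>N. \<forall>n\<ge>N. norm (S m f - S n f) < e"
      by blast
  qed
next
  case False
  have "S n f = 0" for n
    using S[of n] False unfolding Lambda_p_def by (blast intro: bounded_linear_LpD_outside)
  then show ?thesis
    by (simp add: convergent_Cauchy convergent_const)
qed

lemma Cauchy_Lambda_p_bounded:
  fixes S :: "nat \<Rightarrow> ('w \<Rightarrow> 'e::real_normed_vector) \<Rightarrow> 'f::real_normed_vector"
  assumes S: "\<And>n. S n \<in> Lambda_p p M"
    and Cauchy: "\<forall>e>0. \<exists>N. \<forall>m\<ge>N. \<forall>n\<ge>N. tnorm p M (\<lambda>Y. S m Y - S n Y) < e"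
  obtains B where "\<forall>\<^sub>F n in sequentially. tnorm p M (S n) \<le> B"
proof -
  obtain N where N: "\<forall>m\<ge>N. \<forall>n\<ge>N. tnorm p M (\<lambda>Y. S m Y - S n Y) < 1"
    using Cauchy zero_less_one by blast
  have "tnorm p M (S n) \<le> tnorm p M (S N) + 1" if "N \<le> n" for n
  proof -
    have "tnorm p M (\<lambda>Y. S N Y + (S n Y - S N Y)) \<le> tnorm p M (S N) + tnorm p M (\<lambda>Y. S n Y - S N Y)"
      by (rule tnorm_triangle[OF S diff_in_Lambda_p[OF S S]])
    then show ?thesis
      using N that by fastforce
  qed
  then have "\<forall>\<^sub>F n in sequentially. tnorm p M (S n) \<le> tnorm p M (S N) + 1"
    by (rule eventually_sequentiallyI)
  then show ?thesis
    by (rule that)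
qed

lemma tendsto_tnorm_diff_pointwise_limit:
  fixes S :: "nat \<Rightarrow> ('w \<Rightarrow> 'e::real_normed_vector) \<Rightarrow> 'f::real_normed_vector"
  assumes S: "\<And>n. S n \<in> Lambda_p p M" and L: "L \<in> Lambda_p p M" and lim: "\<And>f. (\<lambda>n. S n f) \<longlonglongrightarrow> L f"
    and Cauchy: "\<forall>e>0. \<exists>N. \<forall>m\<ge>N. \<forall>n\<ge>N. tnorm p M (\<lambda>Y. S m Y - S n Y) < e"
  shows "(\<lambda>n. tnorm p M (\<lambda>Y. S n Y - L Y)) \<longlonglongrightarrow> 0"
proof (rule LIMSEQ_I)
  fix r :: real assume r: "0 < r"
  obtain N where N: "\<forall>m\<ge>N. \<forall>n\<ge>N. tnorm p M (\<lambda>Y. S m Y - S n Y) < r / 2"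
    using Cauchy r by (meson half_gt_zero)
  have "norm (tnorm p M (\<lambda>Y. S k Y - L Y)) < r" if k: "N \<le> k" for k
  proof -
    have ev: "\<forall>\<^sub>F m in sequentially. (\<lambda>Y. S k Y - S m Y) \<in> Lambda_p p M \<and>
        tnorm p M (\<lambda>Y. S k Y - S m Y) \<le> r / 2"
      using N k by (intro eventually_sequentiallyI[of N]) (simp add: diff_in_Lambda_p[OF S S] less_imp_le)
    have "tnorm p M (\<lambda>Y. S k Y - L Y) \<le> r / 2"
      by (intro tnorm_least variation_sum_pointwise_limit_le[OF _ ev]) (simp add: tendsto_diff lim)
    moreover have "0 \<le> tnorm p M (\<lambda>Y. S k Y - L Y)"
      by (intro tnorm_nonneg diff_in_Lambda_p S L)
    ultimately show ?thesis
      using r by simp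
  qed
  then show "\<exists>N. \<forall>n\<ge>N. norm (tnorm p M (\<lambda>Y. S n Y - L Y) - 0) < r"
    by auto
qed

lemma Lambda_p_complete:
  fixes S :: "nat \<Rightarrow> ('w \<Rightarrow> 'e::real_normed_vector) \<Rightarrow> 'f::banach"
  assumes M: "finite_measure M" and p: "0 < p" and S: "\<And>n. S n \<in> Lambda_p p M"
    and Cauchy: "\<forall>e>0. \<exists>N. \<forall>m\<ge>N. \<forall>n\<ge>N. tnorm p M (\<lambda>Y. S m Y - S n Y) < e"
  shows "\<exists>L\<in>Lambda_p p M. (\<lambda>n. tnorm p M (\<lambda>Y. S n Y - L Y)) \<longlonglongrightarrow> 0"
proof -
  define L where "L f = lim (\<lambda>n. S n f)" for f
  have lim: "(\<lambda>n. S n f) \<longlonglongrightarrow> L f" for f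
    using Cauchy_Lambda_p_pointwise[OF M p S Cauchy, of f] unfolding L_def
    by (simp add: Cauchy_convergent_iff convergent_LIMSEQ_iff)
  obtain B where B: "\<forall>\<^sub>F n in sequentially. tnorm p M (S n) \<le> B"
    using Cauchy_Lambda_p_bounded[OF S Cauchy] by blast
  have "bounded_linear_Lp p M (S n)" for n
    using S unfolding Lambda_p_def by blast
  then have "bounded_linear_Lp p M L"
  proof (rule bounded_linear_Lp_pointwise_limit[OF _ lim])
    fix f :: "'w \<Rightarrow> 'e" assume f: "f \<in> Lp_space p M"
    show "\<forall>\<^sub>F n in sequentially. norm (S n f) \<le> B * Lp_norm p M f"
      using B
    proof eventually_elim
      case (elim n)
      have "norm (S n f) \<le> tnorm p M (S n) * Lp_norm p M f"
        by (rule norm_le_tnorm_mult_Lp_norm[OF M p S f])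
      also have "\<dots> \<le> B * Lp_norm p M f"
        using elim by (intro mult_right_mono Lp_norm_nonneg)
      finally show ?case .
    qed
  qed
  moreover have "\<forall>\<^sub>F n in sequentially. S n \<in> Lambda_p p M \<and> tnorm p M (S n) \<le> B"
    using B by (simp add: S)
  ultimately have L: "L \<in> Lambda_p p M"
    by (rule Lambda_pI[OF _ variation_sum_pointwise_limit_le[OF lim]])
  then show ?thesis
    using tendsto_tnorm_diff_pointwise_limit[OF S L lim Cauchy] by blast
qed

theorem lemma2p19:
  fixes M :: "'w measure" and p :: real
  assumes "prob_space M" and "1 \<le> p"
  shows "(\<lambda>_. 0) \<in> (Lambda_p p M :: ('w, 'e::banach, 'f::banach) lp_op set)
    \<and> (\<forall>L::('w,'e,'f) lp_op \<in>Lambda_p p M. \<forall>K::('w,'e,'f) lp_op \<in>Lambda_p p M.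
          (\<lambda>Y. L Y + K Y) \<in> Lambda_p p M)
    \<and> (\<forall>L::('w,'e,'f) lp_op \<in>Lambda_p p M. \<forall>c. (\<lambda>Y. c *\<^sub>R L Y) \<in> Lambda_p p M)
    \<and> (\<forall>L::('w,'e,'f) lp_op \<in>Lambda_p p M. 0 \<le> tnorm p M L)
    \<and> (\<forall>L::('w,'e,'f) lp_op \<in>Lambda_p p M. tnorm p M L = 0 \<longleftrightarrow> L = (\<lambda>_. 0))
    \<and> (\<forall>L::('w,'e,'f) lp_op \<in>Lambda_p p M. \<forall>c.
          tnorm p M (\<lambda>Y. c *\<^sub>R L Y) = \<bar>c\<bar> * tnorm p M L)
    \<and> (\<forall>L::('w,'e,'f) lp_op \<in>Lambda_p p M. \<forall>K::('w,'e,'f) lp_op \<in>Lambda_p p M.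
          tnorm p M (\<lambda>Y. L Y + K Y) \<le> tnorm p M L + tnorm p M K)
    \<and> (\<forall>S::nat \<Rightarrow> ('w,'e,'f) lp_op. (\<forall>n. S n \<in> Lambda_p p M) \<and>
          (\<forall>e>0. \<exists>N. \<forall>m\<ge>N. \<forall>n\<ge>N. tnorm p M (\<lambda>Y. S m Y - S n Y) < e)
          \<longrightarrow> (\<exists>L\<in>Lambda_p p M. (\<lambda>n. tnorm p M (\<lambda>Y. S n Y - L Y)) \<longlonglongrightarrow> 0))"
proof -
  have M: "finite_measure M" using assms(1) by (rule prob_space.finite_measure)
  have p: "0 < p" using assms(2) by linarith
  show ?thesis
    by (intro conjI ballI allI impI zero_in_Lambda_p add_in_Lambda_p scaleR_in_Lambda_p tnorm_nonneg
        tnorm_eq_0_iff[OF M p] tnorm_scaleR tnorm_triangle) (auto intro: Lambda_p_complete[OF M p])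
qed

end
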